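(* Suppose $(C,\mathbf A)$ (state space $\mathcal X$) and $(\widetilde C,\widetilde{\mathbf A})$ (state space $\widetilde{\mathcal X}$), with common output space $\mathcal Y$, are two output-stable, observable pairs realizing the same formal kernel: $$C(I-Z(z)A)^{-1}(I-A^*Z(w)^* )^{-1}C^*=\widetilde C(I-Z(z)\widetilde A)^{-1}(I-\widetilde A^*Z(w)^* )^{-1}\widetilde C^*.$$ Then $(C,\mathbf A)$ and $(\widetilde C,\widetilde{\mathbf A})$ are unitarily equivalent: there is a unitary $U\colon\mathcal X\to\widetilde{\mathcal X}$ with $C=\widetilde CU$ and $A_j=U^{-1}\widetilde A_jU$ for $j=1,\dots,d$.
   Context: $\mathcal F_d$: free semigroup of words on $\{1,\dots,d\}$; for $v=i_N\cdots i_1$: $v^\top=i_1\cdots i_N$, $\mathbf A^v=A_{i_N}\cdots A_{i_1}$, $z^v=z_{i_N}\cdots z_{i_1}$. The kernel $C(I-Z(z)A)^{-1}(I-A^*Z(w)^* )^{-1}C^*$ denotes the formal series $\sum_{\alpha,\beta\in\mathcal F_d}C\mathbf A^\alpha(\mathbf A^\beta)^*C^*\,z^\alpha w^{\beta^\top}$ in two sets $z,w$ of noncommuting indeterminates; equality of kernels means equality of all coefficients. $(C,\mathbf A)$ is output-stable if $x\mapsto\{C\mathbf A^vx\}_v$ is bounded from $\mathcal X$ into $\ell^2_{\mathcal Y}(\mathcal F_d)$, and observable if $C\mathbf A^vx=0$ for all $v\in\mathcal F_d$ implies $x=0$. *)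

theory Defs
  imports "HOL-Analysis.Analysis"
begin

class complex_vector = real_vector +
  fixes scaleC :: "complex \<Rightarrow> 'a \<Rightarrow> 'a"
  assumes scaleC_add_right: "scaleC c (x + y) = scaleC c x + scaleC c y"
    and scaleC_add_left: "scaleC (b + c) x = scaleC b x + scaleC c x"
    and scaleC_scaleC: "scaleC b (scaleC c x) = scaleC (b * c) x"
    and scaleC_one: "scaleC 1 x = x"
    and scaleR_scaleC: "scaleR r x = scaleC (complex_of_real r) x"

class complex_inner = complex_vector + real_normed_vector +
  fixes cinner :: "'a \<Rightarrow> 'a \<Rightarrow> complex"
  assumes cinner_add_left: "cinner (x + y) z = cinner x z + cinner y z"
    and cinner_scaleC_left: "cinner (scaleC c x) y = cnj c * cinner x y"
    and cinner_commute: "cinner x y = cnj (cinner y x)"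
    and cinner_ge_zero: "Im (cinner x x) = 0 \<and> Re (cinner x x) \<ge> 0"
    and cinner_eq_zero_iff: "cinner x x = 0 \<longleftrightarrow> x = 0"
    and norm_eq_sqrt_cinner: "norm x = sqrt (Re (cinner x x))"

class chilbert_space = complex_inner + complete_space

definition clinear :: "('a::complex_vector \<Rightarrow> 'b::complex_vector) \<Rightarrow> bool" where
  "clinear f \<longleftrightarrow> (\<forall>x y. f (x + y) = f x + f y) \<and> (\<forall>c x. f (scaleC c x) = scaleC c (f x))"

definition bounded_clinear :: "('a::complex_inner \<Rightarrow> 'b::complex_inner) \<Rightarrow> bool" where
  "bounded_clinear f \<longleftrightarrow> clinear f \<and> (\<exists>K. \<forall>x. norm (f x) \<le> norm x * K)"

text \<open>Hilbert space adjoint (exists and is unique for bounded operators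
  between Hilbert spaces).\<close>
definition cadjoint :: "('a::complex_inner \<Rightarrow> 'b::complex_inner) \<Rightarrow> 'b \<Rightarrow> 'a" where
  "cadjoint f = (SOME g. \<forall>x y. cinner (f x) y = cinner x (g y))"

definition unitary :: "('a::complex_inner \<Rightarrow> 'b::complex_inner) \<Rightarrow> bool" where
  "unitary U \<longleftrightarrow> bounded_clinear U \<and> bij U \<and> (\<forall>x y. cinner (U x) (U y) = cinner x y)"

text \<open>A word v = i_N ... i_1 is the list [i_N, ..., i_1] with letters in {1..d}
  (the empty list is the empty word).\<close>
definition words :: "nat \<Rightarrow> nat list set" where
  "words d = {v. set v \<subseteq> {1..d}}"

definition wpow :: "(nat \<Rightarrow> 'x \<Rightarrow> 'x) \<Rightarrow> nat list \<Rightarrow> 'x \<Rightarrow> 'x" where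
  "wpow A v = foldr (\<lambda>i f. A i \<circ> f) v id"

definition output_stable :: "nat \<Rightarrow> ('x::complex_inner \<Rightarrow> 'y::complex_inner) \<Rightarrow> (nat \<Rightarrow> 'x \<Rightarrow> 'x) \<Rightarrow> bool" where
  "output_stable d C A \<longleftrightarrow> (\<exists>M. \<forall>x.
     (\<lambda>v. (norm (C (wpow A v x)))\<^sup>2) summable_on words d \<and>
     (\<Sum>\<^sub>\<infinity>v\<in>words d. (norm (C (wpow A v x)))\<^sup>2) \<le> M * (norm x)\<^sup>2)"

definition observable :: "nat \<Rightarrow> ('x::complex_inner \<Rightarrow> 'y::complex_inner) \<Rightarrow> (nat \<Rightarrow> 'x \<Rightarrow> 'x) \<Rightarrow> bool" where
  "observable d C A \<longleftrightarrow> (\<forall>x. (\<forall>v\<in>words d. C (wpow A v x) = 0) \<longrightarrow> x = 0)"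

text \<open>Coefficient of z^\<alpha> w^{\<beta>^T} in C(I-Z(z)A)^{-1}(I-A^*Z(w)^*)^{-1}C^*.\<close>
definition kernel_coeff :: "('x::complex_inner \<Rightarrow> 'y::complex_inner) \<Rightarrow> (nat \<Rightarrow> 'x \<Rightarrow> 'x) \<Rightarrow> nat list \<Rightarrow> nat list \<Rightarrow> 'y \<Rightarrow> 'y" where
  "kernel_coeff C A \<alpha> \<beta> = C \<circ> wpow A \<alpha> \<circ> cadjoint (wpow A \<beta>) \<circ> cadjoint C"

end

theory Submission
  imports Defs
begin

(* Call x and xt related when C A^v x = Ct At^v xt for every word v.  Since
   <x, (A^b)* C* y> = <C A^b x, y>, related vectors have the same inner products with the two
   components of each pair ((A^b)* C* y, (At^b)* Ct* y), and the kernel identity says precisely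
   that these pairs, hence all pairs in their span, are themselves related.  Observability makes
   the span of the (A^b)* C* y dense; the partners of an approximating sequence form a Cauchy
   sequence, so by completeness every x has a related xt, and (observability of the second pair)
   related vectors have the same inner products.  A relation that is total in both directions and
   preserves inner products is the graph of a unitary U, and U intertwines the two pairs because
   appending a letter to the words preserves the relation. *)

section \<open>Complex inner product spaces\<close>

lemma linear_scaleC: "linear (scaleC c :: 'a::complex_vector \<Rightarrow> 'a)"
  by (rule linearI) (simp_all add: scaleC_add_right scaleR_scaleC scaleC_scaleC mult.commute)


lemma scaleC_minus1_left: "scaleC (-1) (x::'a::complex_vector) = - x"
  by (metis scaleR_scaleC of_real_1 of_real_minus scaleR_minus1_left)

lemma cinner_add_right: "cinner x (y + z) = cinner x y + cinner x (z::'a::complex_inner)"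
  by (subst (1 2 3) cinner_commute) (simp add: cinner_add_left)

lemma cinner_scaleC_right: "cinner x (scaleC c y) = c * cinner x (y::'a::complex_inner)"
  by (subst (1 2) cinner_commute) (simp add: cinner_scaleC_left)

lemma linear_cinner_left: "linear (\<lambda>x. cinner x (z::'a::complex_inner))"
  by (rule linearI) (simp_all add: cinner_add_left scaleR_scaleC cinner_scaleC_left scaleR_conv_of_real)

lemma linear_cinner_right: "linear (cinner (z::'a::complex_inner))"
  by (rule linearI) (simp_all add: cinner_add_right scaleR_scaleC cinner_scaleC_right scaleR_conv_of_real)

lemmas cinner_zero_left[simp] = linear_0[OF linear_cinner_left]
lemmas cinner_zero_right[simp] = linear_0[OF linear_cinner_right]
lemmas cinner_diff_left = linear_diff[OF linear_cinner_left]
lemmas cinner_diff_right = linear_diff[OF linear_cinner_right]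

lemma cinner_self: "cinner x x = complex_of_real ((norm (x::'a::complex_inner))\<^sup>2)"
proof (rule complex_eqI)
  show "Re (cinner x x) = Re (complex_of_real ((norm x)\<^sup>2))"
    using cinner_ge_zero[of x] by (simp add: norm_eq_sqrt_cinner)
qed (simp add: cinner_ge_zero)

lemma power2_norm_eq_cinner: "(norm (x::'a::complex_inner))\<^sup>2 = Re (cinner x x)"
  by (simp add: cinner_self)

lemma cinner_ext: "(\<And>z. cinner z x = cinner z y) \<Longrightarrow> x = (y::'a::complex_inner)"
  by (metis cinner_diff_right cinner_eq_zero_iff eq_iff_diff_eq_0)

lemma norm_diff_projection_sq:
  fixes x y :: "'a::complex_inner"
  assumes "y \<noteq> 0"
  shows "(norm (x - scaleC (cinner y x / complex_of_real ((norm y)\<^sup>2)) y))\<^sup>2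
     = (norm x)\<^sup>2 - (cmod (cinner y x))\<^sup>2 / (norm y)\<^sup>2"
proof -
  define n where "n = (norm y)\<^sup>2"
  define a where "a = cinner y x"
  define c where "c = a / complex_of_real n"
  have n: "n > 0" using assms by (simp add: n_def)
  have a_cnj: "complex_of_real ((cmod a)\<^sup>2) = a * cnj a"
    by (metis complex_norm_square)
  have "complex_of_real ((norm (x - scaleC c y))\<^sup>2) = cinner (x - scaleC c y) (x - scaleC c y)"
    by (simp add: cinner_self)
  also have "\<dots> = cinner x x - c * cinner x y - cnj c * cinner y x + cnj c * c * cinner y y"
    by (simp add: cinner_diff_left cinner_diff_right cinner_scaleC_left cinner_scaleC_right algebra_simps)
  also have "\<dots> = complex_of_real ((norm x)\<^sup>2) - c * cnj a - cnj c * a + cnj c * c * n"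
    by (simp add: cinner_self a_def n_def cinner_commute[of x y])
  also have "\<dots> = complex_of_real ((norm x)\<^sup>2 - (cmod a)\<^sup>2 / n)"
    using n a_cnj by (simp add: c_def field_simps)
  finally show ?thesis unfolding c_def a_def n_def using of_real_eq_iff by blast
qed

lemma norm_cinner_le: "cmod (cinner x y) \<le> norm x * norm (y::'a::complex_inner)"
proof (cases "x = 0")
  case False
  have "0 \<le> (norm y)\<^sup>2 - (cmod (cinner x y))\<^sup>2 / (norm x)\<^sup>2"
    using norm_diff_projection_sq[OF False, of y] by (metis zero_le_power2)
  then have "(cmod (cinner x y))\<^sup>2 \<le> (norm x * norm y)\<^sup>2"
    using False by (simp add: field_simps power_mult_distrib)
  then show ?thesis by (meson norm_ge_zero mult_nonneg_nonneg power2_le_imp_le)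
qed simp

lemma bounded_linear_cinner_right: "bounded_linear (cinner (z::'a::complex_inner))"
proof (rule bounded_linear_intro)
  show "norm (cinner z x) \<le> norm x * norm z" for x
    using norm_cinner_le[of z x] by (simp add: mult.commute)
qed (simp_all add: linear_add[OF linear_cinner_right] linear_scale[OF linear_cinner_right])

lemma norm_scaleC: "norm (scaleC c (x::'a::complex_inner)) = cmod c * norm x"
proof -
  have "complex_of_real ((norm (scaleC c x))\<^sup>2) = cinner (scaleC c x) (scaleC c x)"
    by (rule cinner_self[symmetric])
  also have "\<dots> = (cnj c * c) * cinner x x"
    by (simp add: cinner_scaleC_left cinner_scaleC_right)
  also have "\<dots> = complex_of_real ((cmod c * norm x)\<^sup>2)"
    by (metis cinner_self complex_norm_square mult.commute of_real_mult power_mult_distrib)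
  finally have "(norm (scaleC c x))\<^sup>2 = (cmod c * norm x)\<^sup>2"
    using of_real_eq_iff by blast
  then show ?thesis by (simp add: power2_eq_iff_nonneg)
qed

lemma bounded_linear_scaleC: "bounded_linear (scaleC c :: 'a::complex_inner \<Rightarrow> 'a)"
proof (rule bounded_linear_intro)
  show "norm (scaleC c x) \<le> norm x * cmod c" for x :: 'a
    by (simp add: norm_scaleC mult.commute)
qed (simp_all add: linear_add[OF linear_scaleC] linear_scale[OF linear_scaleC])

lemma parallelogram_law:
  "(norm (x + y))\<^sup>2 + (norm (x - y))\<^sup>2 = 2 * (norm x)\<^sup>2 + 2 * (norm (y::'a::complex_inner))\<^sup>2"
  by (simp add: power2_norm_eq_cinner cinner_add_left cinner_add_right
      cinner_diff_left cinner_diff_right)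

section \<open>Orthogonal projection and the Riesz representation\<close>

definition csubspace :: "'a::complex_vector set \<Rightarrow> bool" where
  "csubspace M \<longleftrightarrow> 0 \<in> M \<and> (\<forall>x\<in>M. \<forall>y\<in>M. x + y \<in> M) \<and> (\<forall>c. \<forall>x\<in>M. scaleC c x \<in> M)"

lemma closure_csubspace:
  fixes S :: "'a::complex_inner set"
  assumes "csubspace S"
  shows "csubspace (closure S)"
proof -
  have S: "0 \<in> S" "\<And>a b. a \<in> S \<Longrightarrow> b \<in> S \<Longrightarrow> a + b \<in> S" "\<And>c a. a \<in> S \<Longrightarrow> scaleC c a \<in> S"
    using assms unfolding csubspace_def by auto
  have "a + b \<in> closure S" if ab: "a \<in> closure S" "b \<in> closure S" for a b
  proof -
    obtain f g where f: "\<forall>n. f n \<in> S" "f \<longlonglongrightarrow> a" and g: "\<forall>n. g n \<in> S" "g \<longlonglongrightarrow> b"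
      using ab unfolding closure_sequential by blast
    have "(\<lambda>n. f n + g n) \<longlonglongrightarrow> a + b" using f(2) g(2) by (rule tendsto_add)
    moreover have "\<forall>n. f n + g n \<in> S" using f(1) g(1) S(2) by blast
    ultimately show ?thesis unfolding closure_sequential by (intro exI[of _ "\<lambda>n. f n + g n"]) simp
  qed
  moreover have "scaleC c a \<in> closure S" if a: "a \<in> closure S" for a c
  proof -
    obtain f where f: "\<forall>n. f n \<in> S" "f \<longlonglongrightarrow> a"
      using a unfolding closure_sequential by blast
    have "(\<lambda>n. scaleC c (f n)) \<longlonglongrightarrow> scaleC c a"
      using bounded_linear.tendsto[OF bounded_linear_scaleC f(2)] .
    moreover have "\<forall>n. scaleC c (f n) \<in> S" using f(1) S(3) by blast
    ultimately show ?thesis unfolding closure_sequential by (intro exI[of _ "\<lambda>n. scaleC c (f n)"]) simp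
  qed
  ultimately show ?thesis
    unfolding csubspace_def using S(1) closure_subset by blast
qed

lemma norm_diff_midpoint_sq:
  fixes x k l :: "'a::complex_inner"
  shows "(norm (k - l))\<^sup>2
    = 2 * (norm (x - k))\<^sup>2 + 2 * (norm (x - l))\<^sup>2 - 4 * (norm (x - scaleR (1/2) (k + l)))\<^sup>2"
proof -
  have "(x - k) + (x - l) = scaleR 2 (x - scaleR (1/2) (k + l))"
    by (simp add: algebra_simps scaleR_2)
  moreover have "(x - k) - (x - l) = l - k" by simp
  ultimately show ?thesis
    using parallelogram_law[of "x - k" "x - l"]
    by (simp add: power_mult_distrib norm_minus_commute[of l k])
qed

lemma minimizing_sequence_Cauchy:
  fixes M :: "'a::complex_inner set"
  assumes midpoint: "\<And>k l. k \<in> M \<Longrightarrow> l \<in> M \<Longrightarrow> scaleR (1/2) (k + l) \<in> M"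
    and lower: "\<And>k. k \<in> M \<Longrightarrow> \<delta> \<le> (norm (x - k))\<^sup>2"
    and kM: "\<And>n. k n \<in> M" and kD: "\<And>n. (norm (x - k n))\<^sup>2 < \<delta> + inverse (real (Suc n))"
  shows "Cauchy k"
proof (rule metric_CauchyI)
  fix e :: real assume "e > 0"
  then obtain N where N: "inverse (real (Suc N)) < e\<^sup>2 / 4"
    using reals_Archimedean by (metis divide_pos_pos zero_less_numeral zero_less_power)
  have "dist (k m) (k n) < e" if "m \<ge> N" "n \<ge> N" for m n
  proof -
    have "inverse (real (Suc m)) \<le> inverse (real (Suc N))" "inverse (real (Suc n)) \<le> inverse (real (Suc N))"
      using that by (simp_all add: field_simps)
    then have "(norm (k m - k n))\<^sup>2 < e\<^sup>2"
      using norm_diff_midpoint_sq[of "k m" "k n" x] kD[of m] kD[of n] N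
        lower[OF midpoint[OF kM[of m] kM[of n]]]
      by linarith
    then show ?thesis unfolding dist_norm using \<open>e > 0\<close> by (simp add: power_less_imp_less_base)
  qed
  then show "\<exists>N. \<forall>m\<ge>N. \<forall>n\<ge>N. dist (k m) (k n) < e" by blast
qed

lemma closest_point_exists:
  fixes M :: "'a::chilbert_space set"
  assumes "closed M" and "csubspace M"
  shows "\<exists>m\<in>M. \<forall>k\<in>M. norm (x - m) \<le> norm (x - k)"
proof -
  define D where "D k = (norm (x - k))\<^sup>2" for k
  define \<delta> where "\<delta> = Inf (D ` M)"
  have "0 \<in> M" using assms(2) unfolding csubspace_def by blast
  have "bdd_below (D ` M)" by (rule bdd_belowI[of _ 0]) (auto simp: D_def)
  then have \<delta>_le: "\<delta> \<le> D k" if "k \<in> M" for k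
    unfolding \<delta>_def using that by (simp add: cInf_lower)
  have "\<exists>k\<in>M. D k < \<delta> + inverse (real (Suc n))" for n
    using cInf_lessD[of "D ` M" "\<delta> + inverse (real (Suc n))"] \<open>0 \<in> M\<close> unfolding \<delta>_def by auto
  then obtain k where kM: "\<And>n. k n \<in> M" and kD: "\<And>n. D (k n) < \<delta> + inverse (real (Suc n))"
    by metis
  have "Cauchy k"
  proof (rule minimizing_sequence_Cauchy[OF _ _ kM])
    show "scaleR (1/2) (k + l) \<in> M" if "k \<in> M" "l \<in> M" for k l
      using assms(2) that unfolding csubspace_def scaleR_scaleC by blast
  qed (use \<delta>_le kD in \<open>simp_all add: D_def\<close>)
  then obtain m where km: "k \<longlonglongrightarrow> m" using Cauchy_convergent convergent_def by blast
  have "m \<in> M" using closed_sequentially[OF assms(1)] kM km by blast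
  have "(\<lambda>n. D (k n)) \<longlonglongrightarrow> D m" unfolding D_def by (intro tendsto_intros km)
  moreover have "(\<lambda>n. \<delta> + inverse (real (Suc n))) \<longlonglongrightarrow> \<delta> + 0"
    by (intro tendsto_intros LIMSEQ_inverse_real_of_nat)
  ultimately have "D m \<le> \<delta>" using kD by (intro LIMSEQ_le) (auto intro: less_imp_le)
  then have "norm (x - m) \<le> norm (x - l)" if "l \<in> M" for l
    using \<delta>_le[OF that] unfolding D_def by (meson norm_ge_zero order.trans power2_le_imp_le)
  with \<open>m \<in> M\<close> show ?thesis by blast
qed

lemma closest_point_orthogonal:
  fixes M :: "'a::complex_inner set"
  assumes "csubspace M" and "m \<in> M" and closest: "\<forall>l\<in>M. norm (x - m) \<le> norm (x - l)"
    and "k \<in> M"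
  shows "cinner k (x - m) = 0"
proof (cases "k = 0")
  case False
  define c where "c = cinner k (x - m) / complex_of_real ((norm k)\<^sup>2)"
  have "m + scaleC c k \<in> M" using assms unfolding csubspace_def by blast
  then have "(norm (x - m))\<^sup>2 \<le> (norm ((x - m) - scaleC c k))\<^sup>2"
    using closest by (simp add: diff_diff_eq power_mono)
  also have "\<dots> = (norm (x - m))\<^sup>2 - (cmod (cinner k (x - m)))\<^sup>2 / (norm k)\<^sup>2"
    unfolding c_def by (rule norm_diff_projection_sq[OF False])
  finally have "(cmod (cinner k (x - m)))\<^sup>2 / (norm k)\<^sup>2 \<le> 0" by simp
  then show ?thesis using False by (simp add: divide_le_0_iff)
qed simp

lemma orthogonal_projection_exists:
  fixes M :: "'a::chilbert_space set"
  assumes "closed M" and "csubspace M"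
  shows "\<exists>m\<in>M. \<forall>k\<in>M. cinner k (x - m) = 0"
  using closest_point_exists[OF assms] closest_point_orthogonal[OF assms(2)] by metis

lemma dense_if_orthogonal_complement_trivial:
  fixes S :: "'a::chilbert_space set"
  assumes "csubspace S" and orth: "\<And>x. \<forall>k\<in>S. cinner k x = 0 \<Longrightarrow> x = 0"
  shows "closure S = UNIV"
proof -
  have "x \<in> closure S" for x
  proof -
    obtain m where "m \<in> closure S" and "\<forall>k\<in>closure S. cinner k (x - m) = 0"
      using orthogonal_projection_exists[OF closed_closure closure_csubspace[OF assms(1)]] by blast
    then show ?thesis using orth[of "x - m"] closure_subset by auto
  qed
  then show ?thesis by blast
qed

lemma riesz_representation:
  fixes f :: "'a::chilbert_space \<Rightarrow> complex"
  assumes bl: "bounded_linear f" and scaleC: "\<And>c x. f (scaleC c x) = c * f x"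
  shows "\<exists>z. \<forall>x. f x = cinner z x"
proof (cases "\<forall>x. f x = 0")
  case False
  then obtain x0 where x0: "f x0 \<noteq> 0" by blast
  note lin = bounded_linear.linear[OF bl]
  define K where "K = {x. f x = 0}"
  have "closed K" unfolding K_def
    by (intro closed_Collect_eq linear_continuous_on bl continuous_on_const)
  moreover have "csubspace K" unfolding K_def csubspace_def
    using linear_add[OF lin] linear_0[OF lin] scaleC by auto
  ultimately obtain m where "m \<in> K" and orth: "\<forall>k\<in>K. cinner k (x0 - m) = 0"
    using orthogonal_projection_exists by blast
  define u where "u = x0 - m"
  have fu: "f u = f x0" using \<open>m \<in> K\<close> unfolding u_def K_def by (simp add: linear_diff[OF lin])
  have n0: "norm u \<noteq> 0" using x0 fu linear_0[OF lin] by auto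
  show ?thesis
  proof (intro exI[of _ "scaleC (cnj (f u) / complex_of_real ((norm u)\<^sup>2)) u"] allI)
    fix x
    have "f (x - scaleC (f x / f u) u) = 0"
      using x0 fu by (simp add: linear_diff[OF lin] scaleC)
    then have "cinner u (x - scaleC (f x / f u) u) = 0"
      using orth unfolding K_def u_def by (metis cinner_commute complex_cnj_zero mem_Collect_eq)
    then have "cinner u x = (f x / f u) * complex_of_real ((norm u)\<^sup>2)"
      by (simp add: cinner_diff_right cinner_scaleC_right cinner_self)
    then show "f x = cinner (scaleC (cnj (f u) / complex_of_real ((norm u)\<^sup>2)) u) x"
      using x0 fu n0 by (simp add: cinner_scaleC_left field_simps)
  qed
qed (intro exI[of _ 0], simp)

section \<open>Bounded operators and their adjoints\<close>

lemma clinear_add: "clinear T \<Longrightarrow> T (x + y) = T x + T y"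
  unfolding clinear_def by blast

lemma clinear_scaleC: "clinear T \<Longrightarrow> T (scaleC c x) = scaleC c (T x)"
  unfolding clinear_def by blast

lemma clinear_linear: "clinear T \<Longrightarrow> linear T"
  by (rule linearI) (simp_all add: clinear_add clinear_scaleC scaleR_scaleC)

lemma bounded_clinear_clinear: "bounded_clinear T \<Longrightarrow> clinear T"
  unfolding bounded_clinear_def by blast

lemma bounded_clinear_bounded_linear:
  assumes "bounded_clinear T"
  shows "bounded_linear T"
proof -
  obtain K where K: "\<forall>x. norm (T x) \<le> norm x * K" and "clinear T"
    using assms unfolding bounded_clinear_def by blast
  then have "linear T" by (simp add: clinear_linear)
  then show ?thesis
    using K by (intro bounded_linear_intro[of T K]) (simp_all add: linear_add linear_scale)
qed

lemma bounded_clinear_id: "bounded_clinear id"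
  unfolding bounded_clinear_def clinear_def by (intro conjI exI[of _ 1]) auto

lemma bounded_clinear_compose:
  assumes "bounded_clinear f" and "bounded_clinear g"
  shows "bounded_clinear (f \<circ> g)"
proof -
  have "bounded_linear (f \<circ> g)"
    using bounded_linear_compose[OF assms[THEN bounded_clinear_bounded_linear]] by (simp add: o_def)
  then obtain K where "\<forall>x. norm ((f \<circ> g) x) \<le> norm x * K"
    using bounded_linear.bounded by blast
  moreover have "clinear (f \<circ> g)"
    using assms[THEN bounded_clinear_clinear] unfolding clinear_def by simp
  ultimately show ?thesis unfolding bounded_clinear_def by blast
qed

lemma cadjoint_exists:
  fixes T :: "'a::chilbert_space \<Rightarrow> 'b::complex_inner"
  assumes "bounded_clinear T"
  shows "\<exists>g. \<forall>x y. cinner (T x) y = cinner x (g y)"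
proof -
  have "\<exists>z. \<forall>x. cinner y (T x) = cinner z x" for y
  proof (rule riesz_representation)
    show "bounded_linear (\<lambda>x. cinner y (T x))"
      using bounded_linear_compose[OF bounded_linear_cinner_right
          bounded_clinear_bounded_linear[OF assms]] .
    show "cinner y (T (scaleC c x)) = c * cinner y (T x)" for c x
      using bounded_clinear_clinear[OF assms] by (simp add: clinear_scaleC cinner_scaleC_right)
  qed
  then show ?thesis by (metis cinner_commute)
qed

lemma cinner_cadjoint:
  fixes T :: "'a::chilbert_space \<Rightarrow> 'b::complex_inner"
  assumes "bounded_clinear T"
  shows "cinner x (cadjoint T y) = cinner (T x) y"
  using someI_ex[OF cadjoint_exists[OF assms]] unfolding cadjoint_def by metis

lemma cinner_cadjoint_left:
  fixes T :: "'a::chilbert_space \<Rightarrow> 'b::complex_inner"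
  assumes "bounded_clinear T"
  shows "cinner (cadjoint T y) x = cinner y (T x)"
  by (metis cinner_commute cinner_cadjoint[OF assms])

lemma unitary_if_surj_preserves_cinner:
  fixes U :: "'a::complex_inner \<Rightarrow> 'b::complex_inner"
  assumes "surj U" and cinner_U: "\<And>x y. cinner (U x) (U y) = cinner x y"
  shows "unitary U"
proof -
  have eqI: "a = b" if "\<And>z. cinner (U z) a = cinner (U z) b" for a b
    using that \<open>surj U\<close> by (metis cinner_ext surjD)
  have "U (x + y) = U x + U y" for x y
    by (rule eqI) (simp add: cinner_U cinner_add_right)
  moreover have "U (scaleC c x) = scaleC c (U x)" for c x
    by (rule eqI) (simp add: cinner_U cinner_scaleC_right)
  moreover have "norm (U x) = norm x" for x
    by (simp add: norm_eq_sqrt_cinner cinner_U)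
  moreover have "inj U"
    by (rule injI) (metis cinner_U cinner_ext)
  ultimately show ?thesis
    unfolding unitary_def bounded_clinear_def clinear_def bij_def
    using \<open>surj U\<close> cinner_U by (intro conjI exI[of _ 1]) auto
qed

lemma unitary_from_cinner_preserving_relation:
  fixes R :: "'a::complex_inner \<Rightarrow> 'b::complex_inner \<Rightarrow> bool"
  assumes left_total: "\<And>x. \<exists>t. R x t" and right_total: "\<And>t. \<exists>x. R x t"
    and cinner_R: "\<And>x s y t. R x s \<Longrightarrow> R y t \<Longrightarrow> cinner s t = cinner x y"
  shows "\<exists>U. unitary U \<and> (\<forall>x t. R x t \<longleftrightarrow> t = U x)"
proof -
  have unique: "s = t" if "R x s" "R x t" for x s t
  proof -
    have "cinner (s - t) (s - t) = 0"
      using cinner_R[OF that(1) that(1)] cinner_R[OF that(1) that(2)]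
        cinner_R[OF that(2) that(1)] cinner_R[OF that(2) that(2)]
      by (simp add: cinner_diff_left cinner_diff_right)
    then show ?thesis by (simp add: cinner_eq_zero_iff)
  qed
  define U where "U x = (SOME t. R x t)" for x
  have R_U: "R x (U x)" for x
    unfolding U_def using left_total by (rule someI_ex)
  have R_iff: "R x t \<longleftrightarrow> t = U x" for x t
    using unique R_U by blast
  have "surj U"
    using right_total R_iff by (metis surjI)
  moreover have "cinner (U x) (U y) = cinner x y" for x y
    using cinner_R[OF R_U R_U] .
  ultimately show ?thesis
    using unitary_if_surj_preserves_cinner R_iff by blast
qed

section \<open>Words and the output relation of two systems\<close>

lemma wpow_Nil[simp]: "wpow A [] = id"
  by (simp add: wpow_def)

lemma wpow_Cons[simp]: "wpow A (i # v) = A i \<circ> wpow A v"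
  by (simp add: wpow_def)

lemma wpow_append: "wpow A (u @ v) = wpow A u \<circ> wpow A v"
  by (induction u) auto

lemma bounded_clinear_wpow:
  assumes "\<forall>j\<in>{1..d}. bounded_clinear (A j)" and "v \<in> words d"
  shows "bounded_clinear (wpow A v)"
  using assms(2)
proof (induction v)
  case Nil
  show ?case using bounded_clinear_id by (simp only: wpow_Nil)
next
  case (Cons i v)
  then have "bounded_clinear (A i)" and "bounded_clinear (wpow A v)"
    using assms(1) by (auto simp: words_def)
  then show ?case unfolding wpow_Cons by (rule bounded_clinear_compose)
qed

definition same_outputs :: "nat \<Rightarrow> ('x::complex_inner \<Rightarrow> 'y::complex_inner) \<Rightarrow> (nat \<Rightarrow> 'x \<Rightarrow> 'x)
    \<Rightarrow> ('xt::complex_inner \<Rightarrow> 'y) \<Rightarrow> (nat \<Rightarrow> 'xt \<Rightarrow> 'xt) \<Rightarrow> 'x \<Rightarrow> 'xt \<Rightarrow> bool" where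
  "same_outputs d C A Ct At x xt \<longleftrightarrow> (\<forall>v\<in>words d. C (wpow A v x) = Ct (wpow At v xt))"

lemma same_outputs_sym: "same_outputs d C A Ct At x xt \<longleftrightarrow> same_outputs d Ct At C A xt x"
  unfolding same_outputs_def by auto

lemma same_outputs_output_eq:
  assumes "same_outputs d C A Ct At x xt"
  shows "C x = Ct xt"
  using assms[unfolded same_outputs_def, rule_format, of "[]"] by (simp add: words_def)

lemma same_outputs_step:
  assumes "same_outputs d C A Ct At x xt" and "j \<in> {1..d}"
  shows "same_outputs d C A Ct At (A j x) (At j xt)"
  unfolding same_outputs_def
proof
  fix v assume "v \<in> words d"
  then have "v @ [j] \<in> words d" using assms(2) by (simp add: words_def)
  then have "C (wpow A (v @ [j]) x) = Ct (wpow At (v @ [j]) xt)"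
    using assms(1) unfolding same_outputs_def by blast
  then show "C (wpow A v (A j x)) = Ct (wpow At v (At j xt))"
    by (simp add: wpow_append)
qed

text \<open>The unitary is to map \<open>(A\<^sup>\<beta>)\<^sup>* C\<^sup>* y\<close> to \<open>(At\<^sup>\<beta>)\<^sup>* Ct\<^sup>* y\<close>;
  this is its graph on the span of these vectors.\<close>

inductive_set paired_span :: "nat \<Rightarrow> ('x::chilbert_space \<Rightarrow> 'y::chilbert_space) \<Rightarrow> (nat \<Rightarrow> 'x \<Rightarrow> 'x)
    \<Rightarrow> ('xt::chilbert_space \<Rightarrow> 'y) \<Rightarrow> (nat \<Rightarrow> 'xt \<Rightarrow> 'xt) \<Rightarrow> ('x \<times> 'xt) set"
  for d C A Ct At where
  gen: "\<beta> \<in> words d \<Longrightarrow>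
    (cadjoint (wpow A \<beta>) (cadjoint C y), cadjoint (wpow At \<beta>) (cadjoint Ct y)) \<in> paired_span d C A Ct At"
| zero: "(0, 0) \<in> paired_span d C A Ct At"
| add: "(a, b) \<in> paired_span d C A Ct At \<Longrightarrow> (a', b') \<in> paired_span d C A Ct At \<Longrightarrow>
    (a + a', b + b') \<in> paired_span d C A Ct At"
| scale: "(a, b) \<in> paired_span d C A Ct At \<Longrightarrow> (scaleC c a, scaleC c b) \<in> paired_span d C A Ct At"

lemma paired_span_diff:
  assumes "(a, b) \<in> paired_span d C A Ct At" and "(a', b') \<in> paired_span d C A Ct At"
  shows "(a - a', b - b') \<in> paired_span d C A Ct At"
  using paired_span.add[OF assms(1) paired_span.scale[OF assms(2), of "-1"]]
  by (simp add: scaleC_minus1_left)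

lemma csubspace_fst_paired_span: "csubspace (fst ` paired_span d C A Ct At)"
  unfolding csubspace_def
proof (intro conjI ballI allI)
  show "0 \<in> fst ` paired_span d C A Ct At"
    using paired_span.zero by force
next
  fix x y assume "x \<in> fst ` paired_span d C A Ct At" "y \<in> fst ` paired_span d C A Ct At"
  then obtain b b' where "(x, b) \<in> paired_span d C A Ct At" "(y, b') \<in> paired_span d C A Ct At"
    by force
  from paired_span.add[OF this] show "x + y \<in> fst ` paired_span d C A Ct At"
    by force
next
  fix c x assume "x \<in> fst ` paired_span d C A Ct At"
  then obtain b where "(x, b) \<in> paired_span d C A Ct At"
    by force
  from paired_span.scale[OF this] show "scaleC c x \<in> fst ` paired_span d C A Ct At"
    by force
qed

context
  fixes d :: nat
    and C :: "'x::chilbert_space \<Rightarrow> 'y::chilbert_space" and A :: "nat \<Rightarrow> 'x \<Rightarrow> 'x"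
    and Ct :: "'xt::chilbert_space \<Rightarrow> 'y" and At :: "nat \<Rightarrow> 'xt \<Rightarrow> 'xt"
  assumes bounded_C: "bounded_clinear C" and bounded_A: "\<forall>j\<in>{1..d}. bounded_clinear (A j)"
    and bounded_Ct: "bounded_clinear Ct" and bounded_At: "\<forall>j\<in>{1..d}. bounded_clinear (At j)"
begin

lemma bounded_clinear_outputs:
  assumes "v \<in> words d"
  shows "bounded_clinear (C \<circ> wpow A v)" and "bounded_clinear (Ct \<circ> wpow At v)"
  using bounded_clinear_compose[OF bounded_C bounded_clinear_wpow[OF bounded_A assms]]
    bounded_clinear_compose[OF bounded_Ct bounded_clinear_wpow[OF bounded_At assms]] .

lemma same_outputs_right_unique:
  assumes "observable d Ct At"
    and "same_outputs d C A Ct At x s" and "same_outputs d C A Ct At x t"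
  shows "s = t"
proof -
  have "Ct (wpow At v (s - t)) = 0" if "v \<in> words d" for v
    using assms(2,3) bounded_clinear_outputs(2)[OF that, THEN bounded_clinear_clinear, THEN clinear_linear, THEN linear_diff] that
    unfolding same_outputs_def by simp
  then have "s - t = 0" using assms(1) unfolding observable_def by blast
  then show ?thesis by simp
qed

lemma paired_span_same_outputs:
  assumes kernel: "\<forall>\<alpha>\<in>words d. \<forall>\<beta>\<in>words d. kernel_coeff C A \<alpha> \<beta> = kernel_coeff Ct At \<alpha> \<beta>"
    and "(a, b) \<in> paired_span d C A Ct At"
  shows "same_outputs d C A Ct At a b"
  unfolding same_outputs_def
proof
  fix v assume v: "v \<in> words d"
  note clin = bounded_clinear_outputs[OF v, THEN bounded_clinear_clinear]
  note lin = clin[THEN clinear_linear]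
  show "C (wpow A v a) = Ct (wpow At v b)"
    using assms(2)
  proof (induction rule: paired_span.induct)
    case (gen \<beta> y)
    then show ?case using kernel v by (simp add: kernel_coeff_def fun_eq_iff)
  next
    case zero
    show ?case using lin[THEN linear_0] by simp
  next
    case (add a b a' b')
    then show ?case using lin[THEN linear_add] by simp
  next
    case (scale a b c)
    then show ?case using clin[THEN clinear_scaleC] by simp
  qed
qed

lemma cinner_paired_span:
  assumes "(p, q) \<in> paired_span d C A Ct At" and "same_outputs d C A Ct At s t"
  shows "cinner s p = cinner t q"
  using assms(1)
proof (induction rule: paired_span.induct)
  case (gen \<beta> y)
  have "cinner s (cadjoint (wpow A \<beta>) (cadjoint C y)) = cinner (C (wpow A \<beta> s)) y"
    using cinner_cadjoint[OF bounded_clinear_wpow[OF bounded_A gen]] cinner_cadjoint[OF bounded_C]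
    by simp
  moreover have "cinner t (cadjoint (wpow At \<beta>) (cadjoint Ct y)) = cinner (Ct (wpow At \<beta> t)) y"
    using cinner_cadjoint[OF bounded_clinear_wpow[OF bounded_At gen]] cinner_cadjoint[OF bounded_Ct]
    by simp
  ultimately show ?case
    using assms(2) gen unfolding same_outputs_def by simp
next
  case zero then show ?case by simp
next
  case (add a b a' b') then show ?case by (simp add: cinner_add_right)
next
  case (scale a b c) then show ?case by (simp add: cinner_scaleC_right)
qed

lemma paired_span_approximation:
  assumes "observable d C A"
  shows "\<exists>a b. (\<forall>n. (a n, b n) \<in> paired_span d C A Ct At) \<and> a \<longlonglongrightarrow> x"
proof -
  have "closure (fst ` paired_span d C A Ct At) = UNIV"
  proof (rule dense_if_orthogonal_complement_trivial[OF csubspace_fst_paired_span])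
    fix z assume orth: "\<forall>k\<in>fst ` paired_span d C A Ct At. cinner k z = 0"
    have "C (wpow A v z) = 0" if v: "v \<in> words d" for v
    proof -
      define y where "y = C (wpow A v z)"
      have "cadjoint (wpow A v) (cadjoint C y) \<in> fst ` paired_span d C A Ct At"
        by (rule image_eqI[OF _ paired_span.gen[OF v]]) simp
      then have "cinner (cadjoint (wpow A v) (cadjoint C y)) z = 0"
        using orth by blast
      moreover have "cinner (cadjoint (wpow A v) (cadjoint C y)) z = cinner y y"
        unfolding y_def using cinner_cadjoint_left[OF bounded_clinear_wpow[OF bounded_A v]]
          cinner_cadjoint_left[OF bounded_C] by simp
      ultimately show ?thesis unfolding y_def by (simp add: cinner_eq_zero_iff)
    qed
    then show "z = 0" using assms unfolding observable_def by blast
  qed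
  then have "x \<in> closure (fst ` paired_span d C A Ct At)" by simp
  then obtain a where a: "\<forall>n. a n \<in> fst ` paired_span d C A Ct At" and "a \<longlonglongrightarrow> x"
    unfolding closure_sequential by blast
  have "\<exists>b. (a n, b) \<in> paired_span d C A Ct At" for n
  proof -
    obtain p where "p \<in> paired_span d C A Ct At" and "a n = fst p" using a by blast
    then show ?thesis by (intro exI[of _ "snd p"]) simp
  qed
  then obtain b where "\<forall>n. (a n, b n) \<in> paired_span d C A Ct At" by metis
  with \<open>a \<longlonglongrightarrow> x\<close> show ?thesis by blast
qed

lemma paired_span_partner_converges:
  assumes kernel: "\<forall>\<alpha>\<in>words d. \<forall>\<beta>\<in>words d. kernel_coeff C A \<alpha> \<beta> = kernel_coeff Ct At \<alpha> \<beta>"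
    and ab: "\<forall>n. (a n, b n) \<in> paired_span d C A Ct At" and "a \<longlonglongrightarrow> x"
  shows "\<exists>xt. b \<longlonglongrightarrow> xt \<and> same_outputs d C A Ct At x xt"
proof -
  have "norm (b n - b m) = norm (a n - a m)" for n m
  proof -
    have "(a n - a m, b n - b m) \<in> paired_span d C A Ct At"
      using ab by (simp add: paired_span_diff)
    then have "cinner (a n - a m) (a n - a m) = cinner (b n - b m) (b n - b m)"
      using cinner_paired_span paired_span_same_outputs[OF kernel] by blast
    then show ?thesis by (simp add: norm_eq_sqrt_cinner)
  qed
  moreover have "Cauchy a" using \<open>a \<longlonglongrightarrow> x\<close> by (rule LIMSEQ_imp_Cauchy)
  ultimately have "Cauchy b" unfolding Cauchy_def dist_norm by simp
  then obtain xt where "b \<longlonglongrightarrow> xt" using Cauchy_convergent convergent_def by blast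
  have "C (wpow A v x) = Ct (wpow At v xt)" if v: "v \<in> words d" for v
  proof (rule LIMSEQ_unique)
    show "(\<lambda>n. C (wpow A v (a n))) \<longlonglongrightarrow> C (wpow A v x)"
      using bounded_linear.tendsto[OF bounded_clinear_outputs(1)[OF v,
          THEN bounded_clinear_bounded_linear] \<open>a \<longlonglongrightarrow> x\<close>] by simp
    have "(\<lambda>n. Ct (wpow At v (b n))) \<longlonglongrightarrow> Ct (wpow At v xt)"
      using bounded_linear.tendsto[OF bounded_clinear_outputs(2)[OF v,
          THEN bounded_clinear_bounded_linear] \<open>b \<longlonglongrightarrow> xt\<close>] by simp
    moreover have "Ct (wpow At v (b n)) = C (wpow A v (a n))" for n
      using paired_span_same_outputs[OF kernel ab[rule_format, of n]] v
      unfolding same_outputs_def by simp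
    ultimately show "(\<lambda>n. C (wpow A v (a n))) \<longlonglongrightarrow> Ct (wpow At v xt)"
      by simp
  qed
  with \<open>b \<longlonglongrightarrow> xt\<close> show ?thesis unfolding same_outputs_def by auto
qed

lemma same_outputs_left_total:
  assumes kernel: "\<forall>\<alpha>\<in>words d. \<forall>\<beta>\<in>words d. kernel_coeff C A \<alpha> \<beta> = kernel_coeff Ct At \<alpha> \<beta>"
    and "observable d C A"
  shows "\<exists>xt. same_outputs d C A Ct At x xt"
  using paired_span_approximation[OF assms(2)] paired_span_partner_converges[OF kernel] by blast

lemma cinner_same_outputs:
  assumes kernel: "\<forall>\<alpha>\<in>words d. \<forall>\<beta>\<in>words d. kernel_coeff C A \<alpha> \<beta> = kernel_coeff Ct At \<alpha> \<beta>"
    and "observable d C A" and "observable d Ct At"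
    and x: "same_outputs d C A Ct At x xt" and y: "same_outputs d C A Ct At y yt"
  shows "cinner xt yt = cinner x y"
proof -
  obtain a b where ab: "\<forall>n. (a n, b n) \<in> paired_span d C A Ct At" and "a \<longlonglongrightarrow> y"
    using paired_span_approximation[OF assms(2)] by blast
  then obtain yt' where "b \<longlonglongrightarrow> yt'" and "same_outputs d C A Ct At y yt'"
    using paired_span_partner_converges[OF kernel] by blast
  then have "b \<longlonglongrightarrow> yt" using same_outputs_right_unique[OF assms(3) y] by simp
  show ?thesis
  proof (rule LIMSEQ_unique)
    show "(\<lambda>n. cinner xt (b n)) \<longlonglongrightarrow> cinner xt yt"
      using bounded_linear_cinner_right \<open>b \<longlonglongrightarrow> yt\<close> by (rule bounded_linear.tendsto)
    have "(\<lambda>n. cinner x (a n)) \<longlonglongrightarrow> cinner x y"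
      using bounded_linear_cinner_right \<open>a \<longlonglongrightarrow> y\<close> by (rule bounded_linear.tendsto)
    moreover have "cinner x (a n) = cinner xt (b n)" for n
      using cinner_paired_span[OF ab[rule_format, of n] x] .
    ultimately show "(\<lambda>n. cinner xt (b n)) \<longlonglongrightarrow> cinner x y" by simp
  qed
qed

end

theorem theorem2p13:
  fixes d :: nat
    and C :: "'x::chilbert_space \<Rightarrow> 'y::chilbert_space" and A :: "nat \<Rightarrow> 'x \<Rightarrow> 'x"
    and Ct :: "'xt::chilbert_space \<Rightarrow> 'y" and At :: "nat \<Rightarrow> 'xt \<Rightarrow> 'xt"
  assumes "bounded_clinear C" and "\<forall>j\<in>{1..d}. bounded_clinear (A j)"
    and "bounded_clinear Ct" and "\<forall>j\<in>{1..d}. bounded_clinear (At j)"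
    and "output_stable d C A" and "observable d C A"
    and "output_stable d Ct At" and "observable d Ct At"
    and "\<forall>\<alpha>\<in>words d. \<forall>\<beta>\<in>words d. kernel_coeff C A \<alpha> \<beta> = kernel_coeff Ct At \<alpha> \<beta>"
  shows "\<exists>U :: 'x \<Rightarrow> 'xt. unitary U \<and> C = Ct \<circ> U \<and> (\<forall>j\<in>{1..d}. A j = inv U \<circ> At j \<circ> U)"
proof -
  note bounded = assms(1-4) and kernel = assms(9)
  have kernel_sym: "\<forall>\<alpha>\<in>words d. \<forall>\<beta>\<in>words d. kernel_coeff Ct At \<alpha> \<beta> = kernel_coeff C A \<alpha> \<beta>"
    using kernel by simp
  have "\<exists>U. unitary U \<and> (\<forall>x xt. same_outputs d C A Ct At x xt \<longleftrightarrow> xt = U x)"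
  proof (rule unitary_from_cinner_preserving_relation)
    show "\<exists>xt. same_outputs d C A Ct At x xt" for x
      using same_outputs_left_total[OF bounded kernel assms(6)] .
    show "\<exists>x. same_outputs d C A Ct At x xt" for xt
      using same_outputs_left_total[OF assms(3,4,1,2) kernel_sym assms(8)] same_outputs_sym by blast
    show "cinner xt yt = cinner x y"
      if "same_outputs d C A Ct At x xt" and "same_outputs d C A Ct At y yt" for x xt y yt
      using cinner_same_outputs[OF bounded kernel assms(6,8) that] .
  qed
  then obtain U where "unitary U" and graph: "\<And>x xt. same_outputs d C A Ct At x xt \<longleftrightarrow> xt = U x"
    by blast
  then have same_U: "same_outputs d C A Ct At x (U x)" for x by blast
  have "C = Ct \<circ> U" using same_outputs_output_eq[OF same_U] by auto
  moreover have "A j = inv U \<circ> At j \<circ> U" if "j \<in> {1..d}" for j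
  proof
    fix x
    have "At j (U x) = U (A j x)" using same_outputs_step[OF same_U that] graph by blast
    moreover have "inj U" using \<open>unitary U\<close> unfolding unitary_def by (simp add: bij_is_inj)
    ultimately show "A j x = (inv U \<circ> At j \<circ> U) x" by simp
  qed
  ultimately show ?thesis using \<open>unitary U\<close> by blast
qed

end
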